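(* Let $a,b,q$ be complex numbers with $q\ne0$, and define $B_{n,k}(a,b)$ ($n\ge k\ge0$) by $$z^k=\sum_{n=k}^\infty B_{n,k}(a,b)\,z^n\frac{(az;q)_n}{(bz;q)_n}\qquad(k\ge0)$$ in $\mathbb{C}[[z]]$. Then for every integer $n\ge1$, as rational functions of $y$, $$\sum_{k=0}^nB_{n,k}(a,b)y^k=\frac{(b/y;q)_{n-1}}{(a/y;q)_n}y^{n}-a\sum_{k=0}^{n-1}B_{n-k,1}(a,b)\,q^{(n-k)k}\frac{(b/y;q)_k}{(a/y;q)_{k+1}}y^k.$$
   Context: $(x;q)_n=\prod_{j=0}^{n-1}(1-xq^j)$ for $n\ge0$, $(x;q)_0=1$. The family $\{z^n(az;q)_n/(bz;q)_n\}_{n\ge0}$ is a basis of $\mathbb{C}[[z]]$ in the formal sense, so the $B_{n,k}(a,b)$ are uniquely determined. *)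

theory Defs
  imports Complex_Main "HOL-Computational_Algebra.Formal_Power_Series"
begin

definition qpoch :: "complex \<Rightarrow> complex \<Rightarrow> nat \<Rightarrow> complex" where
  "qpoch x q n = (\<Prod>j<n. 1 - x * q ^ j)"

definition qpoch_fps :: "complex \<Rightarrow> complex \<Rightarrow> nat \<Rightarrow> complex fps" where
  "qpoch_fps c q n = (\<Prod>j<n. 1 - fps_const (c * q ^ j) * fps_X)"

definition qbasis :: "complex \<Rightarrow> complex \<Rightarrow> complex \<Rightarrow> nat \<Rightarrow> complex fps" where
  "qbasis a b q n = fps_X ^ n * qpoch_fps a q n / qpoch_fps b q n"

text \<open>The formal infinite
  sum is expressed coefficientwise: the m-th coefficient of the n-th term
  vanishes for n > m, so only n = k..m contribute to the coefficient of z^m.\<close>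
definition Bcoef :: "complex \<Rightarrow> complex \<Rightarrow> complex \<Rightarrow> nat \<Rightarrow> nat \<Rightarrow> complex" where
  "Bcoef a b q = (THE B. (\<forall>n k. n < k \<longrightarrow> B n k = 0) \<and>
      (\<forall>k m. fps_nth (fps_X ^ k) m = (\<Sum>n=k..m. B n k * fps_nth (qbasis a b q n) m)))"

end

theory Submission
  imports Defs
begin

text \<open>
  Write phi_k(z) = z^k (az;q)_k / (bz;q)_k and P_n(y) = sum_k B_{n,k} y^k. Summing the
  defining expansions of z^k against y^k gives sum_n P_n(y) phi_n(z) = 1/(1 - yz), and since
  phi_k = z^k + O(z^(k+1)), the coefficients P_0, ..., P_n are already determined by this
  identity modulo z^(n+1). So it suffices to prove the same congruence for the claimed
  right-hand sides R_k = A_k - a sum_i B_{k-i,1} q^((k-i)i) C_i. The dilation identity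
  phi_i(z) phi_j(q^i z) = q^(ij) phi_(i+j)(z) turns the expansion z = sum_j B_{j,1} phi_j(z)
  into one of q^i z phi_i(z); this collapses the double sum in sum_k R_k phi_k to
  sum_k A_k phi_k - a z sum_k q^k C_k phi_k, which telescopes after multiplication by 1 - yz.
  Working modulo z^(n+1), i.e. with divisibility by X^(n+1), is what lets the proof get by
  with (a/y;q)_k \<noteq> 0 for k \<le> n only.
\<close>

unbundle fps_syntax

section \<open>Formal power series modulo powers of X\<close>

lemma fps_X_power_dvd_iff:
  "fps_X ^ n dvd (f :: 'a::comm_ring_1 fps) \<longleftrightarrow> (\<forall>k<n. f $ k = 0)"
proof
  assume "fps_X ^ n dvd f"
  then obtain g where "f = fps_X ^ n * g" by (elim dvdE)
  then show "\<forall>k<n. f $ k = 0" by (simp add: fps_X_power_mult_nth)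
next
  assume "\<forall>k<n. f $ k = 0"
  then have "f = fps_X ^ n * fps_shift n f"
    by (auto simp: fps_eq_iff fps_X_power_mult_nth)
  then show "fps_X ^ n dvd f" by (metis dvd_triv_left)
qed

lemma fps_X_power_dvd_compose_linear:
  "fps_X ^ n dvd (f :: 'a::comm_ring_1 fps) \<Longrightarrow> fps_X ^ n dvd f oo (fps_const c * fps_X)"
  by (simp add: fps_X_power_dvd_iff)

lemma fps_const_sum: "fps_const (sum f A) = (\<Sum>i\<in>A. fps_const (f i :: 'a::comm_monoid_add))"
  by (rule fps_ext) (simp add: fps_sum_nth)

section \<open>The basis z^n (az;q)_n / (bz;q)_n\<close>

lemma qpoch_fps_Suc: "qpoch_fps c q (Suc n) = qpoch_fps c q n * (1 - fps_const (c * q ^ n) * fps_X)"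
  by (simp add: qpoch_fps_def)

lemma qpoch_fps_nth_0 [simp]: "qpoch_fps c q n $ 0 = 1"
  by (induction n) (simp_all add: qpoch_fps_Suc qpoch_fps_def)

lemma qpoch_fps_add:
  "qpoch_fps c q (i + j) = qpoch_fps c q i * (qpoch_fps c q j oo (fps_const (q ^ i) * fps_X))"
proof (induction j)
  case 0
  then show ?case by (simp add: qpoch_fps_def)
next
  case (Suc j)
  have "(1 - fps_const (c * q ^ j) * fps_X) oo (fps_const (q ^ i) * fps_X)
      = 1 - fps_const (c * q ^ (i + j)) * fps_X"
    by (rule fps_ext) (auto simp: fps_X_nth power_add le_Suc_eq)
  then show ?case
    using Suc by (simp add: qpoch_fps_Suc fps_compose_mult_distrib mult_ac)
qed

lemma inverse_qpoch_fps_Suc: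
  "inverse (qpoch_fps c q n) = (1 - fps_const (c * q ^ n) * fps_X) * inverse (qpoch_fps c q (Suc n))"
  by (simp add: qpoch_fps_Suc fps_inverse_mult mult.left_commute inverse_mult_eq_1')

lemma qpoch_Suc: "qpoch x q (Suc n) = qpoch x q n * (1 - x * q ^ n)"
  by (simp add: qpoch_def)

lemma qpoch_nonzero_le: "qpoch x q n \<noteq> 0 \<Longrightarrow> k \<le> n \<Longrightarrow> qpoch x q k \<noteq> 0"
  by (auto simp: qpoch_def prod_zero_iff)

lemma qbasis_eq: "qbasis a b q n = fps_X ^ n * qpoch_fps a q n * inverse (qpoch_fps b q n)"
  unfolding qbasis_def by (simp add: fps_divide_unit)

lemma fps_X_power_dvd_qbasis: "fps_X ^ n dvd qbasis a b q n"
  by (simp add: qbasis_eq mult.assoc)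

lemma qbasis_nth_self [simp]: "qbasis a b q n $ n = 1"
  by (simp add: qbasis_eq mult.assoc fps_X_power_mult_nth)

lemma qbasis_nth_less: "m < n \<Longrightarrow> qbasis a b q n $ m = 0"
  using fps_X_power_dvd_qbasis fps_X_power_dvd_iff by blast

lemma qbasis_add:
  "fps_const (q ^ (i * j)) * qbasis a b q (i + j)
     = qbasis a b q i * (qbasis a b q j oo (fps_const (q ^ i) * fps_X))"
proof -
  let ?s = "\<lambda>f. f oo (fps_const (q ^ i) * fps_X)"
  have "?s (qbasis a b q j) = fps_const (q ^ (i * j)) * fps_X ^ j * ?s (qpoch_fps a q j)
      * inverse (?s (qpoch_fps b q j))"
    by (simp add: qbasis_eq fps_compose_mult_distrib fps_compose_power [symmetric]
        fps_inverse_compose power_mult_distrib power_mult)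
  then show ?thesis
    by (simp add: qbasis_eq qpoch_fps_add fps_inverse_mult power_add mult_ac)
qed

section \<open>Coordinates in the basis and the coefficients B_{n,k}\<close>

lemma nth_sum_qbasis:
  assumes "m \<le> N"
  shows "(\<Sum>k\<le>N. fps_const (c k) * qbasis a b q k) $ m = (\<Sum>k\<le>m. c k * qbasis a b q k $ m)"
proof -
  have "(\<Sum>k\<le>N. fps_const (c k) * qbasis a b q k) $ m = (\<Sum>k\<le>N. c k * qbasis a b q k $ m)"
    by (simp add: fps_sum_nth)
  also have "\<dots> = (\<Sum>k\<le>m. c k * qbasis a b q k $ m)"
    using assms by (intro sum.mono_neutral_right) (auto simp: qbasis_nth_less)
  finally show ?thesis .
qed

lemma sum_qbasis_dvd_imp_eq_0:
  assumes "fps_X ^ Suc N dvd (\<Sum>k\<le>N. fps_const (c k) * qbasis a b q k)" and "k \<le> N"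
  shows "c k = 0"
  using assms
proof (induction N arbitrary: k)
  case 0
  then show ?case unfolding fps_X_power_dvd_iff by simp
next
  case (Suc N)
  let ?f = "\<Sum>k\<le>N. fps_const (c k) * qbasis a b q k"
  let ?g = "fps_const (c (Suc N)) * qbasis a b q (Suc N)"
  have "fps_X ^ Suc N dvd ?f + ?g"
    using Suc.prems(1) by (simp add: dvd_mult_right)
  moreover have "fps_X ^ Suc N dvd ?g"
    using fps_X_power_dvd_qbasis by (rule dvd_mult)
  ultimately have "fps_X ^ Suc N dvd ?f"
    by (simp add: dvd_add_left_iff)
  then have lower: "c j = 0" if "j \<le> N" for j
    using Suc.IH that by blast
  then have "fps_X ^ Suc (Suc N) dvd ?g"
    using Suc.prems(1) by simp
  then have "?g $ Suc N = 0"
    unfolding fps_X_power_dvd_iff by blast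
  then show ?case
    using lower Suc.prems(2) le_Suc_eq by auto
qed

function qbasis_coord :: "complex \<Rightarrow> complex \<Rightarrow> complex \<Rightarrow> complex fps \<Rightarrow> nat \<Rightarrow> complex" where
  "qbasis_coord a b q f n = f $ n - (\<Sum>j<n. qbasis_coord a b q f j * qbasis a b q j $ n)"
  by auto
termination by (relation "measure (\<lambda>(a, b, q, f, n). n)") auto

declare qbasis_coord.simps [simp del]

lemma sum_qbasis_coord: "(\<Sum>j\<le>m. qbasis_coord a b q f j * qbasis a b q j $ m) = f $ m"
  using qbasis_coord.simps [of a b q f m] by (simp add: lessThan_Suc_atMost [symmetric])

lemma qbasis_coord_eq_0: "(\<And>m. m \<le> n \<Longrightarrow> f $ m = 0) \<Longrightarrow> qbasis_coord a b q f n = 0"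
proof (induction n rule: less_induct)
  case (less n)
  then show ?case by (subst qbasis_coord.simps) simp
qed

lemma qbasis_coord_expansion:
  "fps_X ^ Suc N dvd (\<Sum>n\<le>N. fps_const (qbasis_coord a b q f n) * qbasis a b q n) - f"
  unfolding fps_X_power_dvd_iff by (simp add: nth_sum_qbasis sum_qbasis_coord)

lemma Bcoef_eq_qbasis_coord: "Bcoef a b q n k = qbasis_coord a b q (fps_X ^ k) n"
proof -
  let ?spec = "\<lambda>B. (\<forall>n k. n < k \<longrightarrow> B n k = 0) \<and>
      (\<forall>k m. fps_X ^ k $ m = (\<Sum>n=k..m. B n k * qbasis a b q n $ m))"
  have sum_from_k: "(\<Sum>n=k..m. B n k * qbasis a b q n $ m) = (\<Sum>n\<le>m. B n k * qbasis a b q n $ m)"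
    if "\<And>n. n < k \<Longrightarrow> B n k = 0" for B :: "nat \<Rightarrow> nat \<Rightarrow> complex" and k m
    using that by (intro sum.mono_neutral_left) auto
  have coord_below: "qbasis_coord a b q (fps_X ^ k) n = 0" if "n < k" for n k
    using that by (intro qbasis_coord_eq_0) simp
  have "?spec (\<lambda>n k. qbasis_coord a b q (fps_X ^ k) n)"
  proof (intro conjI allI impI)
    fix k m
    have "(\<Sum>n=k..m. qbasis_coord a b q (fps_X ^ k) n * qbasis a b q n $ m)
        = (\<Sum>n\<le>m. qbasis_coord a b q (fps_X ^ k) n * qbasis a b q n $ m)"
      using coord_below by (rule sum_from_k)
    then show "fps_X ^ k $ m = (\<Sum>n=k..m. qbasis_coord a b q (fps_X ^ k) n * qbasis a b q n $ m)"
      by (simp only: sum_qbasis_coord)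
  qed (rule coord_below)
  moreover have "B = (\<lambda>n k. qbasis_coord a b q (fps_X ^ k) n)" if "?spec B" for B
  proof (intro ext)
    fix n k
    let ?c = "\<lambda>n. B n k - qbasis_coord a b q (fps_X ^ k) n"
    have "fps_X ^ Suc n dvd (\<Sum>j\<le>n. fps_const (?c j) * qbasis a b q j)"
      using that coord_below unfolding fps_X_power_dvd_iff
      by (simp add: nth_sum_qbasis sum_from_k sum_qbasis_coord left_diff_distrib sum_subtractf
          del: fps_X_power_nth)
    then show "B n k = qbasis_coord a b q (fps_X ^ k) n"
      using sum_qbasis_dvd_imp_eq_0 by fastforce
  qed
  ultimately have "Bcoef a b q = (\<lambda>n k. qbasis_coord a b q (fps_X ^ k) n)"
    unfolding Bcoef_def by (rule the_equality)
  then show ?thesis by simp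
qed

lemma Bcoef_eq_0: "n < k \<Longrightarrow> Bcoef a b q n k = 0"
  by (simp add: Bcoef_eq_qbasis_coord qbasis_coord_eq_0)

lemma Bcoef_expansion:
  "fps_X ^ Suc N dvd (\<Sum>n\<le>N. fps_const (Bcoef a b q n k) * qbasis a b q n) - fps_X ^ k"
  unfolding Bcoef_eq_qbasis_coord by (rule qbasis_coord_expansion)

definition Bpoly :: "complex \<Rightarrow> complex \<Rightarrow> complex \<Rightarrow> nat \<Rightarrow> complex \<Rightarrow> complex" where
  "Bpoly a b q n y = (\<Sum>k\<le>n. Bcoef a b q n k * y ^ k)"

lemma Bpoly_expansion:
  "fps_X ^ Suc N dvd
     (\<Sum>n\<le>N. fps_const (Bpoly a b q n y) * qbasis a b q n) * (1 - fps_const y * fps_X) - 1"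
proof -
  let ?S = "\<Sum>n\<le>N. fps_const (Bpoly a b q n y) * qbasis a b q n"
  let ?G = "\<Sum>k\<le>N. (fps_const y * fps_X) ^ k"
  have Bpoly_N: "Bpoly a b q n y = (\<Sum>k\<le>N. Bcoef a b q n k * y ^ k)" if "n \<le> N" for n
    unfolding Bpoly_def using that by (intro sum.mono_neutral_left) (auto simp: Bcoef_eq_0)
  have "?S = (\<Sum>n\<le>N. \<Sum>k\<le>N. fps_const (Bcoef a b q n k * y ^ k) * qbasis a b q n)"
    by (simp add: Bpoly_N fps_const_sum sum_distrib_right del: fps_const_mult)
  also have "\<dots> = (\<Sum>k\<le>N. fps_const (y ^ k) * (\<Sum>n\<le>N. fps_const (Bcoef a b q n k) * qbasis a b q n))"
    by (subst sum.swap) (simp add: sum_distrib_left mult_ac del: fps_const_mult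
        flip: fps_const_mult)
  finally have "?S - ?G = (\<Sum>k\<le>N. fps_const (y ^ k)
      * ((\<Sum>n\<le>N. fps_const (Bcoef a b q n k) * qbasis a b q n) - fps_X ^ k))"
    by (simp add: right_diff_distrib sum_subtractf power_mult_distrib)
  also have "fps_X ^ Suc N dvd \<dots>"
    by (intro dvd_sum dvd_mult Bcoef_expansion)
  finally have "fps_X ^ Suc N dvd (?S - ?G) * (1 - fps_const y * fps_X)"
    by (rule dvd_mult2)
  moreover have "fps_X ^ Suc N dvd (fps_const y * fps_X) ^ Suc N"
    unfolding power_mult_distrib by (rule dvd_triv_right)
  ultimately have "fps_X ^ Suc N dvd
      (?S - ?G) * (1 - fps_const y * fps_X) - (fps_const y * fps_X) ^ Suc N"
    by (rule dvd_diff)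
  also have "(?S - ?G) * (1 - fps_const y * fps_X) - (fps_const y * fps_X) ^ Suc N
      = ?S * (1 - fps_const y * fps_X) - 1"
    using sum_gp_basic [of "fps_const y * fps_X" N] by (simp add: algebra_simps)
  finally show ?thesis .
qed

section \<open>The closed form\<close>

text \<open>The A_k and C_k of the header. At k = 0 the truncated subtraction reads
  (b/y;q)_(k-1) as 1, so A_0 = 1.\<close>

definition Bpoly_lead :: "complex \<Rightarrow> complex \<Rightarrow> complex \<Rightarrow> nat \<Rightarrow> complex \<Rightarrow> complex" where
  "Bpoly_lead a b q k y = qpoch (b / y) q (k - 1) / qpoch (a / y) q k * y ^ k"

definition Bpoly_weight :: "complex \<Rightarrow> complex \<Rightarrow> complex \<Rightarrow> nat \<Rightarrow> complex \<Rightarrow> complex" where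
  "Bpoly_weight a b q k y = qpoch (b / y) q k / qpoch (a / y) q (k + 1) * y ^ k"

lemma Bpoly_lead_0 [simp]: "Bpoly_lead a b q 0 y = 1"
  by (simp add: Bpoly_lead_def qpoch_def)

lemma Bpoly_lead_Suc: "Bpoly_lead a b q (Suc k) y = y * Bpoly_weight a b q k y"
  by (simp add: Bpoly_lead_def Bpoly_weight_def)

lemma Bpoly_weight_0:
  assumes "y \<noteq> 0" and "qpoch (a / y) q 1 \<noteq> 0"
  shows "Bpoly_weight a b q 0 y * (y - a) = y"
  using assms by (simp add: Bpoly_weight_def qpoch_def field_simps)

lemma Bpoly_weight_Suc:
  assumes "y \<noteq> 0" and "qpoch (a / y) q (Suc (Suc k)) \<noteq> 0"
  shows "Bpoly_weight a b q (Suc k) y * (y - a * q ^ Suc k)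
       = Bpoly_lead a b q (Suc k) y * (y - b * q ^ k)"
proof -
  have nonzero: "qpoch (a / y) q (Suc k) \<noteq> 0" "1 - a / y * q ^ Suc k \<noteq> 0"
    using assms(2) qpoch_nonzero_le [OF assms(2)] by (auto simp: qpoch_Suc [of _ _ "Suc k"])
  have weight: "Bpoly_weight a b q (Suc k) y = qpoch (b / y) q k * (1 - b / y * q ^ k)
      / (qpoch (a / y) q (Suc k) * (1 - a / y * q ^ Suc k)) * y ^ Suc k"
    unfolding Bpoly_weight_def Suc_eq_plus1 [symmetric] qpoch_Suc ..
  show ?thesis
    unfolding weight Bpoly_lead_def using nonzero assms(1) by (simp add: field_simps)
qed

text \<open>For k \<ge> 1 the tail is A_k phi_k (1 - b q^(k-1) z); for k = 0 it is 1.\<close>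

definition Bpoly_tail :: "complex \<Rightarrow> complex \<Rightarrow> complex \<Rightarrow> nat \<Rightarrow> complex \<Rightarrow> complex fps" where
  "Bpoly_tail a b q k y = fps_const (Bpoly_lead a b q k y) * fps_X ^ k * qpoch_fps a q k
     * inverse (qpoch_fps b q (k - 1))"

lemma Bpoly_tail_0 [simp]: "Bpoly_tail a b q 0 y = 1"
  by (simp add: Bpoly_tail_def qpoch_fps_def)

lemma telescope_identity:
  fixes L W Y c d P Q X :: "'a::comm_ring_1"
  assumes "W * (Y - c) = L * (Y - d)"
  shows "(L - c * W * X) * (P * Q) * (1 - Y * X)
       = L * P * ((1 - d * X) * Q) - Y * W * (X * P * (1 - c * X)) * Q"
proof -
  have "(L - c * W * X) * (P * Q) * (1 - Y * X)
      - (L * P * ((1 - d * X) * Q) - Y * W * (X * P * (1 - c * X)) * Q)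
      = P * Q * X * (W * (Y - c) - L * (Y - d))"
    by (simp add: algebra_simps)
  with assms show ?thesis by simp
qed

lemma Bpoly_telescope_step:
  assumes "y \<noteq> 0" and "qpoch (a / y) q (Suc k) \<noteq> 0"
  shows "(fps_const (Bpoly_lead a b q k y) - fps_const (a * q ^ k * Bpoly_weight a b q k y) * fps_X)
           * qbasis a b q k * (1 - fps_const y * fps_X)
         = Bpoly_tail a b q k y - Bpoly_tail a b q (Suc k) y"
proof -
  let ?L = "Bpoly_lead a b q k y" and ?W = "Bpoly_weight a b q k y"
  let ?P = "fps_X ^ k * qpoch_fps a q k" and ?Q = "inverse (qpoch_fps b q k)"
  obtain d where rel: "?W * (y - a * q ^ k) = ?L * (y - d)"
    and tail: "Bpoly_tail a b q k y = fps_const ?L * ?P * ((1 - fps_const d * fps_X) * ?Q)"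
  proof (cases k)
    case 0
    have "?W * (y - a * q ^ k) = ?L * (y - 0)"
      using Bpoly_weight_0 assms 0 by simp
    moreover have "Bpoly_tail a b q k y = fps_const ?L * ?P * ((1 - fps_const 0 * fps_X) * ?Q)"
      by (simp add: 0 Bpoly_tail_def qpoch_fps_def)
    ultimately show ?thesis by (rule that)
  next
    case (Suc m)
    have "?W * (y - a * q ^ k) = ?L * (y - b * q ^ m)"
      using Bpoly_weight_Suc assms Suc by simp
    moreover have "Bpoly_tail a b q k y = fps_const ?L * ?P * ((1 - fps_const (b * q ^ m) * fps_X) * ?Q)"
      by (simp add: Suc Bpoly_tail_def inverse_qpoch_fps_Suc [of b q m] mult_ac)
    ultimately show ?thesis by (rule that)
  qed
  have tail_Suc: "Bpoly_tail a b q (Suc k) y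
      = fps_const y * fps_const ?W * (fps_X * ?P * (1 - fps_const (a * q ^ k) * fps_X)) * ?Q"
    by (simp add: Bpoly_tail_def Bpoly_lead_Suc qpoch_fps_Suc mult.assoc)
  from rel have "fps_const ?W * (fps_const y - fps_const (a * q ^ k))
      = fps_const ?L * (fps_const y - fps_const d)"
    by simp
  from telescope_identity [OF this, of fps_X ?P ?Q] show ?thesis
    unfolding tail tail_Suc qbasis_eq by (simp add: mult.assoc)
qed

lemma Bpoly_telescope:
  assumes "y \<noteq> 0" and "qpoch (a / y) q N \<noteq> 0"
  shows "(\<Sum>k<N. (fps_const (Bpoly_lead a b q k y)
             - fps_const (a * q ^ k * Bpoly_weight a b q k y) * fps_X) * qbasis a b q k)
           * (1 - fps_const y * fps_X)
         = 1 - Bpoly_tail a b q N y"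
proof -
  have "(\<Sum>k<N. (fps_const (Bpoly_lead a b q k y)
             - fps_const (a * q ^ k * Bpoly_weight a b q k y) * fps_X) * qbasis a b q k)
           * (1 - fps_const y * fps_X)
      = (\<Sum>k<N. Bpoly_tail a b q k y - Bpoly_tail a b q (Suc k) y)"
    unfolding sum_distrib_right
    using assms qpoch_nonzero_le [OF assms(2)] by (intro sum.cong refl Bpoly_telescope_step) auto
  also have "\<dots> = Bpoly_tail a b q 0 y - Bpoly_tail a b q N y"
    by (rule sum_lessThan_telescope')
  finally show ?thesis
    by simp
qed

lemma Bpoly_tail_congruent:
  "fps_X ^ Suc N dvd Bpoly_tail a b q N y - fps_const (Bpoly_lead a b q N y) * qbasis a b q N"
proof -
  have "fps_X ^ 1 dvd inverse (qpoch_fps b q (N - 1)) - inverse (qpoch_fps b q N)"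
    unfolding fps_X_power_dvd_iff by simp
  then have "fps_X ^ N * fps_X dvd
      fps_const (Bpoly_lead a b q N y) * qpoch_fps a q N * fps_X ^ N
        * (inverse (qpoch_fps b q (N - 1)) - inverse (qpoch_fps b q N))"
    by (intro mult_dvd_mono) simp_all
  then show ?thesis
    by (simp add: Bpoly_tail_def qbasis_eq algebra_simps)
qed

lemma Bpoly_lead_expansion:
  assumes "y \<noteq> 0" and "qpoch (a / y) q n \<noteq> 0"
  shows "fps_X ^ Suc n dvd
     ((\<Sum>k\<le>n. fps_const (Bpoly_lead a b q k y) * qbasis a b q k)
       - fps_X * (\<Sum>k<n. fps_const (a * q ^ k * Bpoly_weight a b q k y) * qbasis a b q k))
     * (1 - fps_const y * fps_X) - 1"
proof -
  let ?T = "\<Sum>k<n. (fps_const (Bpoly_lead a b q k y)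
             - fps_const (a * q ^ k * Bpoly_weight a b q k y) * fps_X) * qbasis a b q k"
  let ?g = "fps_const (Bpoly_lead a b q n y) * qbasis a b q n"
  have "(\<Sum>k\<le>n. fps_const (Bpoly_lead a b q k y) * qbasis a b q k)
       - fps_X * (\<Sum>k<n. fps_const (a * q ^ k * Bpoly_weight a b q k y) * qbasis a b q k)
      = ?T + ?g"
    by (simp add: lessThan_Suc_atMost [symmetric] sum_subtractf sum_distrib_left
        left_diff_distrib right_diff_distrib mult_ac)
  also have "(?T + ?g) * (1 - fps_const y * fps_X) - 1
      = (?g - Bpoly_tail a b q n y) - fps_const y * fps_X * ?g"
    by (simp only: distrib_right Bpoly_telescope [OF assms]) (simp add: algebra_simps)
  also have "fps_X ^ Suc n dvd \<dots>"
  proof (rule dvd_diff)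
    show "fps_X ^ Suc n dvd ?g - Bpoly_tail a b q n y"
      using Bpoly_tail_congruent by (subst dvd_minus_iff [symmetric]) simp
    show "fps_X ^ Suc n dvd fps_const y * fps_X * ?g"
      using fps_X_power_dvd_qbasis by (simp add: mult_dvd_mono mult.assoc)
  qed
  finally show ?thesis .
qed

lemma qbasis_times_X_expansion:
  assumes "i \<le> n"
  shows "fps_X ^ Suc n dvd
     (\<Sum>k=Suc i..n. fps_const (Bcoef a b q (k - i) 1 * q ^ ((k - i) * i)) * qbasis a b q k)
       - fps_const (q ^ i) * fps_X * qbasis a b q i"
proof -
  let ?s = "\<lambda>f. f oo (fps_const (q ^ i) * fps_X)"
  let ?E = "\<Sum>j\<le>n - i. fps_const (Bcoef a b q j 1) * qbasis a b q j"
  let ?t = "\<lambda>j. fps_const (Bcoef a b q j 1) * (fps_const (q ^ (i * j)) * qbasis a b q (i + j))"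
  have interval: "{Suc i..n} = {Suc 0 + i..(n - i) + i}"
    using assms by simp
  have "(\<Sum>k=Suc i..n. fps_const (Bcoef a b q (k - i) 1 * q ^ ((k - i) * i)) * qbasis a b q k)
      = (\<Sum>j=Suc 0..n - i. ?t j)"
    unfolding interval sum.shift_bounds_cl_nat_ivl
    by (simp add: ac_simps del: fps_const_mult add: fps_const_mult [symmetric])
  also have "\<dots> = (\<Sum>j\<le>n - i. ?t j)"
    by (intro sum.mono_neutral_left) (auto simp: Bcoef_eq_0)
  also have "\<dots> = qbasis a b q i * ?s ?E"
    by (simp add: qbasis_add fps_compose_sum_distrib sum_distrib_left mult.left_commute
        flip: fps_const_mult_apply_left)
  finally have "(\<Sum>k=Suc i..n. fps_const (Bcoef a b q (k - i) 1 * q ^ ((k - i) * i)) * qbasis a b q k)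
       - fps_const (q ^ i) * fps_X * qbasis a b q i = qbasis a b q i * ?s (?E - fps_X ^ 1)"
    by (simp add: fps_compose_sub_distrib right_diff_distrib mult.commute)
  also have "fps_X ^ i * fps_X ^ Suc (n - i) dvd \<dots>"
    by (intro mult_dvd_mono fps_X_power_dvd_qbasis fps_X_power_dvd_compose_linear Bcoef_expansion)
  finally show ?thesis
    using assms by (simp only: power_add [symmetric] add_Suc_right le_add_diff_inverse)
qed

definition Bpoly_formula :: "complex \<Rightarrow> complex \<Rightarrow> complex \<Rightarrow> nat \<Rightarrow> complex \<Rightarrow> complex" where
  "Bpoly_formula a b q n y = Bpoly_lead a b q n y
     - a * (\<Sum>i<n. Bcoef a b q (n - i) 1 * q ^ ((n - i) * i) * Bpoly_weight a b q i y)"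

lemma Bpoly_formula_expansion:
  assumes "y \<noteq> 0" and "qpoch (a / y) q n \<noteq> 0"
  shows "fps_X ^ Suc n dvd
     (\<Sum>k\<le>n. fps_const (Bpoly_formula a b q k y) * qbasis a b q k) * (1 - fps_const y * fps_X) - 1"
proof -
  let ?c = "\<lambda>k i. fps_const (Bcoef a b q (k - i) 1 * q ^ ((k - i) * i)) * qbasis a b q k"
  let ?W = "\<lambda>i. fps_const (Bpoly_weight a b q i y)"
  let ?u = "1 - fps_const y * fps_X"
  let ?S = "\<Sum>k\<le>n. fps_const (Bpoly_formula a b q k y) * qbasis a b q k"
  let ?L = "\<Sum>k\<le>n. fps_const (Bpoly_lead a b q k y) * qbasis a b q k"
  let ?H = "?L - fps_X * (\<Sum>i<n. fps_const (a * q ^ i * Bpoly_weight a b q i y) * qbasis a b q i)"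
  have summand: "fps_const (Bpoly_formula a b q k y) * qbasis a b q k
      = fps_const (Bpoly_lead a b q k y) * qbasis a b q k - fps_const a * (\<Sum>i<k. ?W i * ?c k i)"
    for k
    by (simp add: Bpoly_formula_def fps_const_sum sum_distrib_left sum_distrib_right
        left_diff_distrib right_diff_distrib mult_ac del: fps_const_mult fps_const_sub
        add: fps_const_mult [symmetric] fps_const_sub [symmetric])
  have "?S = ?L - fps_const a * (\<Sum>i<n. ?W i * (\<Sum>k=Suc i..n. ?c k i))"
    unfolding summand sum_subtractf sum_distrib_left [symmetric] sum.nested_swap' ..
  then have "?S - ?H = - (fps_const a * (\<Sum>i<n. ?W i
      * ((\<Sum>k=Suc i..n. ?c k i) - fps_const (q ^ i) * fps_X * qbasis a b q i)))"
    by (simp add: sum_subtractf sum_distrib_left algebra_simps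
        del: fps_const_mult add: fps_const_mult [symmetric])
  also have "fps_X ^ Suc n dvd \<dots>"
    by (simp only: dvd_minus_iff) (intro dvd_mult dvd_sum qbasis_times_X_expansion, simp)
  finally have "fps_X ^ Suc n dvd (?S - ?H) * ?u + (?H * ?u - 1)"
    using Bpoly_lead_expansion [OF assms] by (intro dvd_add dvd_mult2)
  then show ?thesis
    by (simp add: algebra_simps)
qed

lemma Bpoly_eq_formula:
  assumes "y \<noteq> 0" and "qpoch (a / y) q n \<noteq> 0"
  shows "Bpoly a b q n y = Bpoly_formula a b q n y"
proof -
  let ?D = "\<Sum>k\<le>n. fps_const (Bpoly_formula a b q k y - Bpoly a b q k y) * qbasis a b q k"
  let ?u = "1 - fps_const y * fps_X"
  have "?D * ?u = ((\<Sum>k\<le>n. fps_const (Bpoly_formula a b q k y) * qbasis a b q k) * ?u - 1)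
      - ((\<Sum>k\<le>n. fps_const (Bpoly a b q k y) * qbasis a b q k) * ?u - 1)"
    by (simp add: left_diff_distrib sum_subtractf del: fps_const_sub add: fps_const_sub [symmetric])
  also have "fps_X ^ Suc n dvd \<dots>"
    using Bpoly_formula_expansion [OF assms] Bpoly_expansion by (rule dvd_diff)
  finally have "fps_X ^ Suc n dvd ?D"
    by (simp add: dvd_mult_unit_iff)
  then have "Bpoly_formula a b q n y - Bpoly a b q n y = 0"
    by (rule sum_qbasis_dvd_imp_eq_0) simp
  then show ?thesis
    by simp
qed

theorem corollary2p1:
  fixes a b q y :: complex and n :: nat
  assumes "q \<noteq> 0" and "n \<ge> 1"
    and "y \<noteq> 0" and "qpoch (a / y) q n \<noteq> 0"
  shows "(\<Sum>k=0..n. Bcoef a b q n k * y ^ k)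
       = qpoch (b / y) q (n - 1) / qpoch (a / y) q n * y ^ n
         - a * (\<Sum>k=0..n-1. Bcoef a b q (n - k) 1 * q ^ ((n - k) * k)
                  * qpoch (b / y) q k / qpoch (a / y) q (k + 1) * y ^ k)"
proof -
  have range: "{0..n-1} = {..<n}"
    using assms(2) by auto
  have "(\<Sum>k=0..n. Bcoef a b q n k * y ^ k) = Bpoly a b q n y"
    by (simp add: Bpoly_def atLeast0AtMost)
  also have "\<dots> = Bpoly_formula a b q n y"
    using assms(3,4) by (rule Bpoly_eq_formula)
  also have "\<dots> = qpoch (b / y) q (n - 1) / qpoch (a / y) q n * y ^ n
         - a * (\<Sum>k=0..n-1. Bcoef a b q (n - k) 1 * q ^ ((n - k) * k)
                  * qpoch (b / y) q k / qpoch (a / y) q (k + 1) * y ^ k)"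
    unfolding range by (simp add: Bpoly_formula_def Bpoly_lead_def Bpoly_weight_def mult.assoc)
  finally show ?thesis .
qed

end
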